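(* Let $P=\{p_1,\dots,p_n\}\subset\mathbb{R}^d$, and let $1\le l\le k$ be integers. Let $P^{(l)}$ be the colored multiset obtained by taking, for each $i$, $l$ copies $p_i^1,\dots,p_i^l$ of $p_i$, all of color $i$. Then for any $\lambda\ge1$ and any $k$ points $\mathcal{C}=\{c_1,\dots,c_k\}\subset\mathbb{R}^d$: $\mathcal{C}$ is a $\lambda$-approximate solution of $(l,k)$-FMeans on $P$ if and only if $\mathcal{C}$, used as the $k$ centers, induces a $\lambda$-approximate solution of $k$-ChMeans on $P^{(l)}$.
   Context: Fault tolerant $k$-means, $(l,k)$-FMeans: find $k$ points $\mathcal{C}\subset\mathbb{R}^d$ minimizing $\frac1n\sum_{i=1}^n$ (sum of the squared distances from $p_i$ to its $l$ nearest points of $\mathcal{C}$); $\mathcal{C}$ is $\lambda$-approximate if its cost is at most $\lambda$ times the minimum. Chromatic $k$-means, $k$-ChMeans, on a colored multiset $Q$ of $N$ points: partition $Q$ into $k$ clusters with no two points of the same color in the same cluster, minimizing $\frac1N\sum_j\sum_{q\in S_j}\|q-m(S_j)\|^2$ ($m(S_j)$ the mean). The $k$-ChMeans cost induced by centers $c_1,\dots,c_k$ is the minimum, over all assignments of the points of $Q$ to centers such that no two points of the same color go to the same center, of $\frac1N\sum_{q}\|q-c_{\text{assigned}(q)}\|^2$; it induces a $\lambda$-approximate solution if this cost is at most $\lambda$ times the optimal $k$-ChMeans value of $Q$. *)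

theory Defs
  imports "HOL-Analysis.Analysis"
begin

text \<open>Input points p 0, ..., p (n-1); centers c 0, ..., c (k-1).\<close>

definition l_nearest_cost :: "nat \<Rightarrow> nat \<Rightarrow> (nat \<Rightarrow> 'a::real_normed_vector) \<Rightarrow> 'a \<Rightarrow> real" where
  "l_nearest_cost l k c x =
     Min {(\<Sum>j\<in>S. (dist x (c j))^2) | S. S \<subseteq> {..<k} \<and> card S = l}"

definition fmeans_cost :: "nat \<Rightarrow> nat \<Rightarrow> (nat \<Rightarrow> 'a::real_normed_vector) \<Rightarrow> nat \<Rightarrow> (nat \<Rightarrow> 'a) \<Rightarrow> real" where
  "fmeans_cost l k p n c = (1 / real n) * (\<Sum>i<n. l_nearest_cost l k c (p i))"

definition fmeans_opt :: "nat \<Rightarrow> nat \<Rightarrow> (nat \<Rightarrow> 'a::real_normed_vector) \<Rightarrow> nat \<Rightarrow> real" where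
  "fmeans_opt l k p n = Inf (range (fmeans_cost l k p n))"

definition fmeans_approx :: "real \<Rightarrow> nat \<Rightarrow> nat \<Rightarrow> (nat \<Rightarrow> 'a::real_normed_vector) \<Rightarrow> nat \<Rightarrow> (nat \<Rightarrow> 'a) \<Rightarrow> bool" where
  "fmeans_approx lam l k p n c \<longleftrightarrow> fmeans_cost l k p n c \<le> lam * fmeans_opt l k p n"

text \<open>A colored multiset is given by a finite index set I, a point map pt and a
  color map col (repeated points are distinct indices). A partition into k
  clusters (possibly empty) is an assignment sigma of indices to {..<k};
  it is chromatic if no two distinct indices of the same color share a cluster.\<close>

definition chromatic_assignment :: "'i set \<Rightarrow> ('i \<Rightarrow> 'c) \<Rightarrow> nat \<Rightarrow> ('i \<Rightarrow> nat) \<Rightarrow> bool" where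
  "chromatic_assignment I col k \<sigma> \<longleftrightarrow>
     (\<forall>x\<in>I. \<sigma> x < k) \<and>
     (\<forall>x\<in>I. \<forall>y\<in>I. x \<noteq> y \<and> \<sigma> x = \<sigma> y \<longrightarrow> col x \<noteq> col y)"

definition cluster_mean :: "('i \<Rightarrow> 'a::real_vector) \<Rightarrow> 'i set \<Rightarrow> 'a" where
  "cluster_mean pt S = (1 / real (card S)) *\<^sub>R (\<Sum>q\<in>S. pt q)"

definition chmeans_cost :: "'i set \<Rightarrow> ('i \<Rightarrow> 'a::real_normed_vector) \<Rightarrow> nat \<Rightarrow> ('i \<Rightarrow> nat) \<Rightarrow> real" where
  "chmeans_cost I pt k \<sigma> = (1 / real (card I)) *
     (\<Sum>j<k. \<Sum>q\<in>{q\<in>I. \<sigma> q = j}. (norm (pt q - cluster_mean pt {q\<in>I. \<sigma> q = j}))^2)"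

definition chmeans_opt :: "'i set \<Rightarrow> ('i \<Rightarrow> 'a::real_normed_vector) \<Rightarrow> ('i \<Rightarrow> 'c) \<Rightarrow> nat \<Rightarrow> real" where
  "chmeans_opt I pt col k = Inf {chmeans_cost I pt k \<sigma> | \<sigma>. chromatic_assignment I col k \<sigma>}"

definition chmeans_center_cost :: "'i set \<Rightarrow> ('i \<Rightarrow> 'a::real_normed_vector) \<Rightarrow> ('i \<Rightarrow> 'c) \<Rightarrow> nat \<Rightarrow> (nat \<Rightarrow> 'a) \<Rightarrow> real" where
  "chmeans_center_cost I pt col k c =
     Inf {(1 / real (card I)) * (\<Sum>q\<in>I. (dist (pt q) (c (\<sigma> q)))^2) | \<sigma>. chromatic_assignment I col k \<sigma>}"

definition chmeans_induces_approx :: "real \<Rightarrow> 'i set \<Rightarrow> ('i \<Rightarrow> 'a::real_normed_vector) \<Rightarrow> ('i \<Rightarrow> 'c) \<Rightarrow> nat \<Rightarrow> (nat \<Rightarrow> 'a) \<Rightarrow> bool" where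
  "chmeans_induces_approx lam I pt col k c \<longleftrightarrow>
     chmeans_center_cost I pt col k c \<le> lam * chmeans_opt I pt col k"

text \<open>Index (i,t): the t-th copy of p i, of color i.\<close>

definition copies_idx :: "nat \<Rightarrow> nat \<Rightarrow> (nat \<times> nat) set" where
  "copies_idx n l = {..<n} \<times> {..<l}"

definition copies_pt :: "(nat \<Rightarrow> 'a) \<Rightarrow> nat \<times> nat \<Rightarrow> 'a" where
  "copies_pt p q = p (fst q)"

definition copies_col :: "nat \<times> nat \<Rightarrow> nat" where
  "copies_col q = fst q"

end

(* A chromatic assignment of P^(l) sends the l copies of p_i to l distinct centers, and every
   choice of l distinct centers per point arises this way; so for fixed centers the induced
   ChMeans cost is the FMeans cost divided by l (normalizing by nl instead of n). For a fixed
   partition the cluster means are the best centers, hence the ChMeans optimum is the infimum of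
   the center-induced costs, i.e. the FMeans optimum divided by l. Both sides of the
   approximation inequality thus scale by 1/l, and the equivalence holds for every lam. *)

theory Submission
  imports Defs
begin

lemma finite_l_nearest_candidates:
  "finite {(\<Sum>j\<in>S. (dist x (c j))^2) | S. S \<subseteq> {..<k::nat} \<and> card S = l}"
proof -
  have "finite {S. S \<subseteq> {..<k} \<and> card S = l}"
    by (rule finite_subset[of _ "Pow {..<k}"]) auto
  then show ?thesis
    by (simp add: setcompr_eq_image)
qed

lemma l_nearest_cost_le:
  assumes "S \<subseteq> {..<k}" "card S = l"
  shows "l_nearest_cost l k c x \<le> (\<Sum>j\<in>S. (dist x (c j))^2)"
  unfolding l_nearest_cost_def
  by (rule Min_le[OF finite_l_nearest_candidates]) (use assms in auto)

lemma l_nearest_cost_attained: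
  assumes "l \<le> k"
  obtains S where "S \<subseteq> {..<k}" "card S = l" "l_nearest_cost l k c x = (\<Sum>j\<in>S. (dist x (c j))^2)"
proof -
  have "{(\<Sum>j\<in>S. (dist x (c j))^2) | S. S \<subseteq> {..<k} \<and> card S = l} \<noteq> {}"
    using assms by (auto intro!: exI[of _ "{..<l}"])
  from Min_in[OF finite_l_nearest_candidates this] show ?thesis
    using that unfolding l_nearest_cost_def by blast
qed

lemma l_nearest_cost_nonneg:
  assumes "l \<le> k"
  shows "0 \<le> l_nearest_cost l k c x"
  by (rule l_nearest_cost_attained[OF assms, of c x]) (auto intro: sum_nonneg)

lemma l_nearest_cost_le_injective:
  assumes "inj_on f {..<l}" "f ` {..<l} \<subseteq> {..<k}"
  shows "l_nearest_cost l k c x \<le> (\<Sum>t<l. (dist x (c (f t)))^2)"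
  using l_nearest_cost_le[OF assms(2), of l c x] card_image[OF assms(1)]
    sum.reindex[OF assms(1), of "\<lambda>j. (dist x (c j))^2"]
  by simp

lemma l_nearest_cost_attained_injective:
  assumes "l \<le> k"
  obtains f where "inj_on f {..<l}" "f ` {..<l} \<subseteq> {..<k}"
    "l_nearest_cost l k c x = (\<Sum>t<l. (dist x (c (f t)))^2)"
proof -
  obtain S where S: "S \<subseteq> {..<k}" "card S = l" "l_nearest_cost l k c x = (\<Sum>j\<in>S. (dist x (c j))^2)"
    using l_nearest_cost_attained[OF assms] .
  then have "finite S"
    using finite_subset by blast
  then obtain f where f: "bij_betw f {..<l} S"
    using ex_bij_betw_nat_finite S(2) by (metis atLeast0LessThan)
  show ?thesis
  proof
    show "inj_on f {..<l}" "f ` {..<l} \<subseteq> {..<k}"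
      using f S(1) by (auto simp: bij_betw_def)
    show "l_nearest_cost l k c x = (\<Sum>t<l. (dist x (c (f t)))^2)"
      using S(3) sum.reindex_bij_betw[OF f, of "\<lambda>j. (dist x (c j))^2"] by simp
  qed
qed

lemma fmeans_cost_nonneg: "l \<le> k \<Longrightarrow> 0 \<le> fmeans_cost l k p n c"
  unfolding fmeans_cost_def by (intro mult_nonneg_nonneg sum_nonneg l_nearest_cost_nonneg) auto

lemma sum_cluster_mean_le:
  fixes x :: "'i \<Rightarrow> 'a::real_inner"
  assumes "finite S"
  shows "(\<Sum>q\<in>S. (norm (x q - cluster_mean x S))^2) \<le> (\<Sum>q\<in>S. (norm (x q - c))^2)"
proof (cases "S = {}")
  case False
  define m where "m = cluster_mean x S"
  have "real (card S) *\<^sub>R m = (\<Sum>q\<in>S. x q)"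
    using assms False unfolding m_def cluster_mean_def by simp
  then have centered: "(\<Sum>q\<in>S. x q - m) = 0"
    by (simp add: sum_subtractf sum_constant_scaleR)
  have "(norm (x q - c))^2 = (norm (x q - m))^2 + 2 * inner (x q - m) (m - c) + (norm (m - c))^2" for q
    using dot_norm[of "x q - m" "m - c"] by simp
  then have "(\<Sum>q\<in>S. (norm (x q - c))^2)
      = (\<Sum>q\<in>S. (norm (x q - m))^2) + 2 * inner (\<Sum>q\<in>S. x q - m) (m - c) + (\<Sum>q\<in>S. (norm (m - c))^2)"
    by (simp add: sum.distrib sum_distrib_left inner_sum_left)
  also have "\<dots> \<ge> (\<Sum>q\<in>S. (norm (x q - m))^2)"
    using centered by (simp add: sum_nonneg)
  finally show ?thesis
    unfolding m_def .
qed simp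

lemma sum_group_assignment:
  assumes "finite I" "\<forall>q\<in>I. \<sigma> q < (k::nat)"
  shows "(\<Sum>q\<in>I. g q (\<sigma> q)) = (\<Sum>j<k. \<Sum>q\<in>{q\<in>I. \<sigma> q = j}. g q j)"
proof -
  have "\<sigma> ` I \<subseteq> {..<k}"
    using assms(2) by auto
  from sum.group[OF assms(1) finite_lessThan this, of "\<lambda>q. g q (\<sigma> q)"] show ?thesis
    by simp
qed

lemma chmeans_cost_eq_sum_cluster_mean:
  fixes pt :: "'i \<Rightarrow> 'a::real_inner"
  assumes "finite I" "\<forall>q\<in>I. \<sigma> q < k"
  shows "chmeans_cost I pt k \<sigma> = (1 / real (card I)) *
     (\<Sum>q\<in>I. (dist (pt q) (cluster_mean pt {q'\<in>I. \<sigma> q' = \<sigma> q}))^2)"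
  unfolding chmeans_cost_def
  using sum_group_assignment[OF assms, of "\<lambda>q j. (dist (pt q) (cluster_mean pt {q'\<in>I. \<sigma> q' = j}))^2"]
  by (simp add: dist_norm)

lemma chmeans_cost_le_center_sum:
  fixes pt :: "'i \<Rightarrow> 'a::real_inner"
  assumes "finite I" "\<forall>q\<in>I. \<sigma> q < k"
  shows "chmeans_cost I pt k \<sigma> \<le> (1 / real (card I)) * (\<Sum>q\<in>I. (dist (pt q) (c (\<sigma> q)))^2)"
proof -
  have "(\<Sum>j<k. \<Sum>q\<in>{q\<in>I. \<sigma> q = j}. (norm (pt q - cluster_mean pt {q\<in>I. \<sigma> q = j}))^2)
      \<le> (\<Sum>j<k. \<Sum>q\<in>{q\<in>I. \<sigma> q = j}. (norm (pt q - c j))^2)"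
    by (intro sum_mono sum_cluster_mean_le) (use assms in auto)
  also have "\<dots> = (\<Sum>q\<in>I. (dist (pt q) (c (\<sigma> q)))^2)"
    using sum_group_assignment[OF assms, of "\<lambda>q j. (norm (pt q - c j))^2"] by (simp add: dist_norm)
  finally show ?thesis
    unfolding chmeans_cost_def by (intro mult_left_mono) auto
qed

lemma chmeans_center_cost_le:
  assumes "chromatic_assignment I col k \<sigma>"
  shows "chmeans_center_cost I pt col k c \<le> (1 / real (card I)) * (\<Sum>q\<in>I. (dist (pt q) (c (\<sigma> q)))^2)"
  unfolding chmeans_center_cost_def
  by (rule cInf_lower) (use assms in \<open>auto intro!: bdd_belowI[of _ 0] divide_nonneg_nonneg sum_nonneg\<close>)

lemma chmeans_center_cost_nonneg:
  assumes "chromatic_assignment I col k \<sigma>"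
  shows "0 \<le> chmeans_center_cost I pt col k c"
  unfolding chmeans_center_cost_def
  by (rule cInf_greatest) (use assms in \<open>auto intro!: divide_nonneg_nonneg sum_nonneg\<close>)

text \<open>For a fixed partition the cluster means are optimal centers, so optimizing over
  partitions and over centers gives the same value.\<close>

lemma chmeans_opt_eq_Inf_center_cost:
  fixes pt :: "'i \<Rightarrow> 'a::real_inner"
  assumes "finite I" and "chromatic_assignment I col k \<sigma>\<^sub>0"
  shows "chmeans_opt I pt col k = Inf (range (chmeans_center_cost I pt col k))"
proof (rule antisym)
  have below: "\<forall>q\<in>I. \<sigma> q < k" if "chromatic_assignment I col k \<sigma>" for \<sigma>
    using that unfolding chromatic_assignment_def by blast
  have bdd: "bdd_below {chmeans_cost I pt k \<sigma> | \<sigma>. chromatic_assignment I col k \<sigma>}"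
    by (rule bdd_belowI[of _ 0]) (auto simp: chmeans_cost_def intro!: divide_nonneg_nonneg sum_nonneg)
  show "chmeans_opt I pt col k \<le> Inf (range (chmeans_center_cost I pt col k))"
  proof (rule cINF_greatest)
    fix c
    show "chmeans_opt I pt col k \<le> chmeans_center_cost I pt col k c"
      unfolding chmeans_center_cost_def
    proof (rule cInf_greatest)
      fix x
      assume "x \<in> {(1 / real (card I)) * (\<Sum>q\<in>I. (dist (pt q) (c (\<sigma> q)))^2) | \<sigma>.
                    chromatic_assignment I col k \<sigma>}"
      then obtain \<sigma> where \<sigma>: "chromatic_assignment I col k \<sigma>"
        and x: "x = (1 / real (card I)) * (\<Sum>q\<in>I. (dist (pt q) (c (\<sigma> q)))^2)"
        by blast
      have "chmeans_opt I pt col k \<le> chmeans_cost I pt k \<sigma>"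
        unfolding chmeans_opt_def by (rule cInf_lower[OF _ bdd]) (use \<sigma> in blast)
      also have "\<dots> \<le> x"
        unfolding x by (rule chmeans_cost_le_center_sum[OF assms(1) below[OF \<sigma>]])
      finally show "chmeans_opt I pt col k \<le> x" .
    qed (use assms(2) in blast)
  qed simp
  show "Inf (range (chmeans_center_cost I pt col k)) \<le> chmeans_opt I pt col k"
    unfolding chmeans_opt_def
  proof (rule cInf_greatest)
    fix x
    assume "x \<in> {chmeans_cost I pt k \<sigma> | \<sigma>. chromatic_assignment I col k \<sigma>}"
    then obtain \<sigma> where \<sigma>: "chromatic_assignment I col k \<sigma>" and x: "x = chmeans_cost I pt k \<sigma>"
      by blast
    define m where "m j = cluster_mean pt {q\<in>I. \<sigma> q = j}" for j
    have "Inf (range (chmeans_center_cost I pt col k)) \<le> chmeans_center_cost I pt col k m"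
      by (rule cINF_lower) (auto intro!: bdd_belowI[of _ 0] chmeans_center_cost_nonneg[OF assms(2)])
    also have "\<dots> \<le> x"
      using chmeans_center_cost_le[OF \<sigma>, of pt m]
        chmeans_cost_eq_sum_cluster_mean[OF assms(1) below[OF \<sigma>], of pt]
      unfolding x m_def by simp
    finally show "Inf (range (chmeans_center_cost I pt col k)) \<le> x" .
  qed (use assms(2) in blast)
qed

lemma finite_copies_idx [simp]: "finite (copies_idx n l)"
  unfolding copies_idx_def by simp

lemma card_copies_idx [simp]: "card (copies_idx n l) = n * l"
  unfolding copies_idx_def by (simp add: card_cartesian_product)

lemma sum_copies_idx: "(\<Sum>q\<in>copies_idx n l. f q) = (\<Sum>i<n. \<Sum>t<l. f (i, t))"
  unfolding copies_idx_def by (simp add: sum.cartesian_product)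

lemma chromatic_assignment_copies_iff:
  "chromatic_assignment (copies_idx n l) copies_col k \<sigma> \<longleftrightarrow>
     (\<forall>i<n. inj_on (\<lambda>t. \<sigma> (i, t)) {..<l} \<and> (\<lambda>t. \<sigma> (i, t)) ` {..<l} \<subseteq> {..<k})"
  unfolding chromatic_assignment_def copies_idx_def copies_col_def inj_on_def image_subset_iff
  by (simp add: Ball_def) blast

lemma chmeans_center_cost_copies:
  assumes "l \<le> k"
  shows "chmeans_center_cost (copies_idx n l) (copies_pt p) copies_col k c = fmeans_cost l k p n c / real l"
proof -
  let ?F = "\<Sum>i<n. l_nearest_cost l k c (p i)"
  define cost where "cost \<sigma> = (1 / real (n * l)) * (\<Sum>i<n. \<Sum>t<l. (dist (p i) (c (\<sigma> (i, t))))^2)"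
    for \<sigma> :: "nat \<times> nat \<Rightarrow> nat"
  have "chmeans_center_cost (copies_idx n l) (copies_pt p) copies_col k c
      = Inf {cost \<sigma> | \<sigma>. chromatic_assignment (copies_idx n l) copies_col k \<sigma>}"
    unfolding chmeans_center_cost_def cost_def by (simp add: sum_copies_idx copies_pt_def)
  also have "\<dots> = (1 / real (n * l)) * ?F"
  proof (rule cInf_eq_minimum)
    have "\<forall>i. \<exists>g. inj_on g {..<l} \<and> g ` {..<l} \<subseteq> {..<k} \<and>
        l_nearest_cost l k c (p i) = (\<Sum>t<l. (dist (p i) (c (g t)))^2)"
      by (metis l_nearest_cost_attained_injective[OF assms])
    then obtain f where f: "\<And>i. inj_on (f i) {..<l}" "\<And>i. f i ` {..<l} \<subseteq> {..<k}"
      "\<And>i. l_nearest_cost l k c (p i) = (\<Sum>t<l. (dist (p i) (c (f i t)))^2)"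
      by metis
    define \<sigma>\<^sub>0 where "\<sigma>\<^sub>0 q = f (fst q) (snd q)" for q
    have "chromatic_assignment (copies_idx n l) copies_col k \<sigma>\<^sub>0"
      using f(1,2) by (simp add: chromatic_assignment_copies_iff \<sigma>\<^sub>0_def)
    moreover have "cost \<sigma>\<^sub>0 = (1 / real (n * l)) * ?F"
      unfolding cost_def \<sigma>\<^sub>0_def by (simp add: f(3))
    ultimately show "(1 / real (n * l)) * ?F
        \<in> {cost \<sigma> | \<sigma>. chromatic_assignment (copies_idx n l) copies_col k \<sigma>}"
      by (intro CollectI exI[of _ \<sigma>\<^sub>0]) simp
  next
    fix x
    assume "x \<in> {cost \<sigma> | \<sigma>. chromatic_assignment (copies_idx n l) copies_col k \<sigma>}"
    then obtain \<sigma> where \<sigma>: "chromatic_assignment (copies_idx n l) copies_col k \<sigma>" and x: "x = cost \<sigma>"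
      by blast
    have "?F \<le> (\<Sum>i<n. \<Sum>t<l. (dist (p i) (c (\<sigma> (i, t))))^2)"
      using \<sigma> unfolding chromatic_assignment_copies_iff
      by (intro sum_mono l_nearest_cost_le_injective) auto
    then show "(1 / real (n * l)) * ?F \<le> x"
      unfolding x cost_def by (intro mult_left_mono) auto
  qed
  finally show ?thesis
    unfolding fmeans_cost_def by simp
qed

lemma chmeans_opt_copies:
  fixes p :: "nat \<Rightarrow> 'a::real_inner"
  assumes "1 \<le> l" "l \<le> k"
  shows "chmeans_opt (copies_idx n l) (copies_pt p) copies_col k = fmeans_opt l k p n / real l"
proof -
  have "chromatic_assignment (copies_idx n l) copies_col k snd"
    using assms(2) by (auto simp: chromatic_assignment_copies_iff)
  then have "chmeans_opt (copies_idx n l) (copies_pt p) copies_col k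
      = (INF c. fmeans_cost l k p n c / real l)"
    by (simp add: chmeans_opt_eq_Inf_center_cost chmeans_center_cost_copies[OF assms(2)])
  also have "\<dots> = fmeans_opt l k p n / real l"
  proof -
    have "fmeans_opt l k p n / real l = (INF x\<in>range (fmeans_cost l k p n). x / real l)"
      unfolding fmeans_opt_def
    proof (rule continuous_at_Inf_mono)
      show "mono (\<lambda>x::real. x / real l)"
        by (intro monoI divide_right_mono) auto
      show "continuous (at_right (Inf (range (fmeans_cost l k p n)))) (\<lambda>x::real. x / real l)"
        using assms by (intro continuous_intros) auto
      show "bdd_below (range (fmeans_cost l k p n))"
        using assms by (intro bdd_belowI[of _ 0]) (auto intro: fmeans_cost_nonneg)
    qed simp
    then show ?thesis
      by (simp add: image_image)
  qed
  finally show ?thesis .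
qed

theorem lemma9:
  fixes p :: "nat \<Rightarrow> 'a::euclidean_space" and n l k :: nat
    and lam :: real and c :: "nat \<Rightarrow> 'a"
  assumes "1 \<le> l" and "l \<le> k" and "lam \<ge> 1"
  shows "fmeans_approx lam l k p n c \<longleftrightarrow>
         chmeans_induces_approx lam (copies_idx n l) (copies_pt p) copies_col k c"
  using assms(1)
  unfolding fmeans_approx_def chmeans_induces_approx_def
    chmeans_center_cost_copies[OF assms(2)] chmeans_opt_copies[OF assms(1,2)]
  by (simp add: times_divide_eq_right divide_le_cancel)

end
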